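(* Let $k,m$ be integers with $k\geqslant 2$ and $m>2k$, and let $n=2k-2$. Then $\alpha(m,n,k)=h(m,n,k)$. Moreover, every $(m,2k-2,k)$-intersecting family of maximum cardinality is of the form \[ \binom{[2k-2]}{k}\cup\{F\cup\{b\}\mid F\in\mathcal{F}^*,\ b\in[2k-1,m]\}, \] where $\mathcal{F}^*$ is an intersecting family of $(k-1)$-subsets of $[2k-2]$ of maximum cardinality.
   Context: For positive integers $a\leqslant b$, $[a,b]=\{a,a+1,\dots,b\}$ and $[a]=[1,a]$; $\binom{X}{k}$ denotes the family of all $k$-subsets of a set $X$. A family of sets is intersecting if no two of its members are disjoint. For integers $0<k\leqslant n<2k<m$, an $(m,n,k)$-intersecting family is an intersecting family $\mathcal{F}$ with $\binom{[n]}{k}\subseteq\mathcal{F}\subseteq\binom{[m]}{k}$, and $\alpha(m,n,k)$ is the maximum cardinality of an $(m,n,k)$-intersecting family. Define $h(m,n,k)=\binom{n}{k}+\sum_{i=1}^{2k-n-1}\binom{n-1}{k-i-1}\binom{m-n}{i}$. *)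

theory Defs
  imports Main
begin

definition ksubsets :: "nat set \<Rightarrow> nat \<Rightarrow> nat set set" where
  "ksubsets X k = {A. A \<subseteq> X \<and> card A = k}"

definition intersecting :: "nat set set \<Rightarrow> bool" where
  "intersecting \<F> \<longleftrightarrow> (\<forall>A\<in>\<F>. \<forall>B\<in>\<F>. A \<inter> B \<noteq> {})"

definition mnk_intersecting :: "nat \<Rightarrow> nat \<Rightarrow> nat \<Rightarrow> nat set set \<Rightarrow> bool" where
  "mnk_intersecting m n k \<F> \<longleftrightarrow>
     intersecting \<F> \<and> ksubsets {1..n} k \<subseteq> \<F> \<and> \<F> \<subseteq> ksubsets {1..m} k"

definition alpha :: "nat \<Rightarrow> nat \<Rightarrow> nat \<Rightarrow> nat" where
  "alpha m n k = Max {card \<F> | \<F>. mnk_intersecting m n k \<F>}"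

definition h :: "nat \<Rightarrow> nat \<Rightarrow> nat \<Rightarrow> nat" where
  "h m n k = (n choose k) +
     (\<Sum>i = 1..2*k - n - 1. ((n - 1) choose (k - i - 1)) * ((m - n) choose i))"

end

theory Submission
  imports Defs
begin

text \<open>Write \<open>lower = [2k-2]\<close> and \<open>upper = [2k-1,m]\<close>. A member of an
  \<open>(m,2k-2,k)\<close>-intersecting family that is not a \<open>k\<close>-subset of \<open>lower\<close> meets \<open>lower\<close>
  in at least \<open>k-1\<close> points, hence is a \<open>(k-1)\<close>-set \<open>A \<subseteq> lower\<close> plus one point of
  \<open>upper\<close>. For complementary \<open>A\<close> and \<open>lower - A\<close> the sets of admissible added points are
  either one of them empty or both the same singleton; as \<open>|upper| > 2\<close>, together they have
  at most \<open>|upper|\<close> points, with equality only if one is all of \<open>upper\<close> and the other is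
  empty. Summing over the \<open>binom(2k-3,k-2)\<close> complementary pairs gives \<open>h\<close>. In the equality
  case the sets extended by all of \<open>upper\<close> form an intersecting family containing one set
  of each pair, which is maximum; a star attains this size.\<close>

lemma finite_ksubsets: "finite N \<Longrightarrow> finite (ksubsets N r)"
  unfolding ksubsets_def by simp

lemma card_ksubsets: "finite N \<Longrightarrow> card (ksubsets N r) = card N choose r"
  unfolding ksubsets_def by (rule n_subsets)

lemma ksubsets_mono: "M \<subseteq> N \<Longrightarrow> ksubsets M r \<subseteq> ksubsets N r"
  unfolding ksubsets_def by blast

lemma Diff_in_ksubsets:
  assumes "finite N" "A \<in> ksubsets N r"
  shows "N - A \<in> ksubsets N (card N - r)"
  using assms unfolding ksubsets_def by (auto simp: card_Diff_subset finite_subset)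

lemma complement_in_ksubsets:
  assumes "finite N" "card N = 2 * r" "A \<in> ksubsets N r"
  shows "N - A \<in> ksubsets N r"
  using Diff_in_ksubsets[OF assms(1,3)] assms(2) by simp

lemma bij_betw_complement_ksubsets:
  assumes "finite N" "card N = 2 * r"
  shows "bij_betw (\<lambda>A. N - A) (ksubsets N r) (ksubsets N r)"
proof (rule bij_betw_byWitness[where f' = "\<lambda>A. N - A"])
  show "\<forall>A\<in>ksubsets N r. N - (N - A) = A" "\<forall>A\<in>ksubsets N r. N - (N - A) = A"
    unfolding ksubsets_def by auto
  show "(\<lambda>A. N - A) ` ksubsets N r \<subseteq> ksubsets N r" "(\<lambda>A. N - A) ` ksubsets N r \<subseteq> ksubsets N r"
    using complement_in_ksubsets[OF assms(1,2)] by auto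
qed

text \<open>An intersecting family contains at most one set of each complementary pair.\<close>
lemma card_intersecting_ksubsets_half:
  assumes "finite N" "card N = 2 * r" "\<G> \<subseteq> ksubsets N r" "intersecting \<G>"
  shows "2 * card \<G> \<le> card (ksubsets N r)"
proof -
  have bij: "bij_betw (\<lambda>A. N - A) \<G> ((\<lambda>A. N - A) ` \<G>)"
    using bij_betw_subset[OF bij_betw_complement_ksubsets[OF assms(1,2)] assms(3)] by simp
  have disj: "\<G> \<inter> (\<lambda>A. N - A) ` \<G> = {}"
    using assms(3,4) unfolding intersecting_def ksubsets_def by auto
  have sub: "\<G> \<union> (\<lambda>A. N - A) ` \<G> \<subseteq> ksubsets N r"
    using assms(3) bij_betw_imp_surj_on[OF bij_betw_complement_ksubsets[OF assms(1,2)]] by auto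
  have fin: "finite \<G>"
    using assms(3) finite_ksubsets[OF assms(1)] finite_subset by blast
  have "2 * card \<G> = card (\<G> \<union> (\<lambda>A. N - A) ` \<G>)"
    using card_Un_disjoint[OF fin _ disj] bij_betw_same_card[OF bij] fin by simp
  also have "\<dots> \<le> card (ksubsets N r)"
    using card_mono[OF finite_ksubsets[OF assms(1)] sub] .
  finally show ?thesis .
qed

lemma card_star_ksubsets_half:
  assumes "finite N" "card N = 2 * r" "a \<in> N"
  shows "2 * card {A \<in> ksubsets N r. a \<in> A} = card (ksubsets N r)"
proof -
  let ?S = "{A \<in> ksubsets N r. a \<in> A}"
  have bij: "bij_betw (\<lambda>A. N - A) ?S (ksubsets N r - ?S)"
  proof (rule bij_betw_byWitness[where f' = "\<lambda>A. N - A"])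
    show "\<forall>A\<in>?S. N - (N - A) = A" "\<forall>A\<in>ksubsets N r - ?S. N - (N - A) = A"
      unfolding ksubsets_def by auto
    show "(\<lambda>A. N - A) ` ?S \<subseteq> ksubsets N r - ?S" "(\<lambda>A. N - A) ` (ksubsets N r - ?S) \<subseteq> ?S"
      using complement_in_ksubsets[OF assms(1,2)] assms(3) by auto
  qed
  have "card (ksubsets N r) = card ?S + card (ksubsets N r - ?S)"
    using card_Diff_subset[of ?S "ksubsets N r"] card_mono[of "ksubsets N r" ?S]
      finite_ksubsets[OF assms(1)] by (auto intro: finite_subset)
  then show ?thesis using bij_betw_same_card[OF bij] by simp
qed

lemma sum_ksubsets_complement:
  assumes "finite N" "card N = 2 * r"
  shows "(\<Sum>A\<in>ksubsets N r. g (N - A)) = (\<Sum>A\<in>ksubsets N r. g A)"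
  using sum.reindex_bij_betw[OF bij_betw_complement_ksubsets[OF assms]] .

lemma intersecting_ksubsets:
  assumes "finite N" "card N < 2 * k"
  shows "intersecting (ksubsets N k)"
  unfolding intersecting_def
proof (intro ballI notI)
  fix X Y assume XY: "X \<in> ksubsets N k" "Y \<in> ksubsets N k" and "X \<inter> Y = {}"
  moreover have "finite X" "finite Y" "card X = k" "card Y = k"
    using XY assms(1) unfolding ksubsets_def by (auto intro: finite_subset)
  ultimately have "card (X \<union> Y) = 2 * k"
    using card_Un_disjoint[of X Y] by simp
  moreover have "card (X \<union> Y) \<le> card N"
    using XY assms(1) unfolding ksubsets_def by (intro card_mono) auto
  ultimately show False using assms(2) by simp
qed

lemma mnk_intersecting_finite: "mnk_intersecting m n k \<F> \<Longrightarrow> finite \<F>"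
  unfolding mnk_intersecting_def using finite_ksubsets[of "{1..m}" k] finite_subset by blast

lemma alpha_eqI:
  assumes "\<And>\<F>. mnk_intersecting m n k \<F> \<Longrightarrow> card \<F> \<le> a"
    and "mnk_intersecting m n k \<F>\<^sub>0" "card \<F>\<^sub>0 = a"
  shows "alpha m n k = a"
  unfolding alpha_def
proof (rule Max_eqI)
  show "finite {card \<F> | \<F>. mnk_intersecting m n k \<F>}"
  proof (rule finite_subset)
    show "{card \<F> | \<F>. mnk_intersecting m n k \<F>} \<subseteq> {..a}"
      using assms(1) by auto
  qed simp
qed (use assms in blast)+

lemma central_binomial_double: "(2 * Suc j) choose Suc j = 2 * ((2 * j + 1) choose j)"
  using binomial_symmetric[of "j + 1" "2 * j + 1"] by simp

lemma intersecting_card_Diff_less: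
  assumes "intersecting \<F>" "ksubsets N k \<subseteq> \<F>" "G \<in> \<F>"
  shows "card (N - G) < k"
proof (rule ccontr)
  assume "\<not> card (N - G) < k"
  then obtain C where C: "C \<subseteq> N - G" "card C = k"
    by (meson not_less obtain_subset_with_card_n)
  then have "C \<in> \<F>" using assms(2) unfolding ksubsets_def by auto
  moreover have "C \<inter> G = {}" using C(1) by blast
  ultimately show False using assms(1,3) unfolding intersecting_def by blast
qed

lemma card_insert_family:
  assumes "\<F>s \<subseteq> Pow N" "B \<inter> N = {}"
  shows "card {F \<union> {b} | F b. F \<in> \<F>s \<and> b \<in> B} = card \<F>s * card B"
proof -
  have "inj_on (\<lambda>(A, b). insert b A) (\<F>s \<times> B)"
  proof (rule inj_onI, clarify)
    fix A b A' b' assume "A \<in> \<F>s" "b \<in> B" "A' \<in> \<F>s" "b' \<in> B" "insert b A = insert b' A'"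
    moreover have "A \<subseteq> N" "A' \<subseteq> N" "b \<notin> N" "b' \<notin> N"
      using assms \<open>A \<in> \<F>s\<close> \<open>A' \<in> \<F>s\<close> \<open>b \<in> B\<close> \<open>b' \<in> B\<close> by auto
    ultimately have "b = b'" by blast
    with \<open>insert b A = insert b' A'\<close> show "A = A' \<and> b = b'"
      using \<open>A \<subseteq> N\<close> \<open>A' \<subseteq> N\<close> \<open>b \<notin> N\<close> by (auto simp: insert_ident)
  qed
  moreover have "{F \<union> {b} | F b. F \<in> \<F>s \<and> b \<in> B} = (\<lambda>(A, b). insert b A) ` (\<F>s \<times> B)"
    by fast
  ultimately show ?thesis by (simp add: card_image card_cartesian_product)
qed

definition extensions :: "nat set set \<Rightarrow> nat set \<Rightarrow> nat set \<Rightarrow> nat set" where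
  "extensions \<F> B A = {b \<in> B. insert b A \<in> \<F>}"

lemma extensions_subset: "extensions \<F> B A \<subseteq> B"
  unfolding extensions_def by blast

text \<open>\<open>insert b A\<close> and \<open>insert b' A'\<close> must meet, and for disjoint \<open>A\<close>, \<open>A'\<close> they can
  only meet in \<open>b = b'\<close>.\<close>
lemma extensions_disjoint_cases:
  assumes "intersecting \<F>" "A \<inter> A' = {}" "B \<inter> A = {}" "B \<inter> A' = {}"
  obtains "extensions \<F> B A = {}" | "extensions \<F> B A' = {}"
    | b where "extensions \<F> B A = {b}" "extensions \<F> B A' = {b}"
proof -
  have same: "b = b'" if "b \<in> extensions \<F> B A" "b' \<in> extensions \<F> B A'" for b b'
  proof -
    have "insert b A \<inter> insert b' A' \<noteq> {}"
      using assms(1) that unfolding intersecting_def extensions_def by blast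
    then show ?thesis using assms(2-4) that extensions_subset by blast
  qed
  show thesis
  proof (cases "extensions \<F> B A = {} \<or> extensions \<F> B A' = {}")
    case False
    then obtain b b' where "b \<in> extensions \<F> B A" "b' \<in> extensions \<F> B A'" by blast
    then have "extensions \<F> B A = {b}" "extensions \<F> B A' = {b}"
      using same by blast+
    then show thesis by (rule that(3))
  qed (use that in blast)
qed

lemma card_extensions_disjoint_le:
  assumes "intersecting \<F>" "A \<inter> A' = {}" "B \<inter> A = {}" "B \<inter> A' = {}"
    and "finite B" "2 \<le> card B"
  shows "card (extensions \<F> B A) + card (extensions \<F> B A') \<le> card B"
proof (cases rule: extensions_disjoint_cases[OF assms(1-4)])
  case 1
  then show ?thesis using card_mono[OF assms(5) extensions_subset] by simp
next
  case 2
  then show ?thesis using card_mono[OF assms(5) extensions_subset] by simp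
next
  case (3 b)
  then show ?thesis using assms(6) by simp
qed

lemma extensions_disjoint_eq:
  assumes "intersecting \<F>" "A \<inter> A' = {}" "B \<inter> A = {}" "B \<inter> A' = {}"
    and "finite B" "2 < card B"
    and "card (extensions \<F> B A) + card (extensions \<F> B A') = card B" "extensions \<F> B A \<noteq> {}"
  shows "extensions \<F> B A = B \<and> extensions \<F> B A' = {}"
proof -
  have "extensions \<F> B A' = {}"
  proof (cases rule: extensions_disjoint_cases[OF assms(1-4)])
    case (3 b)
    then show ?thesis using assms(6,7) by simp
  qed (use assms(8) in simp_all)
  then show ?thesis
    using assms(5,7) card_subset_eq[OF assms(5) extensions_subset] by simp
qed

context
  fixes k m :: nat
  assumes k_ge_2: "k \<ge> 2" and m_gt: "m > 2 * k"
begin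

abbreviation lower :: "nat set" where "lower \<equiv> {1..2*k-2}"
abbreviation upper :: "nat set" where "upper \<equiv> {2*k-1..m}"

lemma card_lower: "card lower = 2 * (k - 1)"
  using k_ge_2 by simp

lemma card_upper_gt_2: "2 < card upper"
  using k_ge_2 m_gt by simp

lemma card_ksubsets_lower: "card (ksubsets lower (k - 1)) = 2 * ((2*k-3) choose (k-2))"
proof -
  obtain j where "k = Suc (Suc j)" using k_ge_2 by (metis add_2_eq_Suc le_Suc_ex)
  then show ?thesis
    using card_ksubsets[of lower "k - 1"] central_binomial_double[of j] by simp
qed

lemma h_eq: "h m (2*k-2) k = ((2*k-2) choose k) + ((2*k-3) choose (k-2)) * card upper"
proof -
  have "2*k - (2*k-2) - 1 = 1" "2*k-2-1 = 2*k-3" "k - 1 - 1 = k - 2" "m - (2*k-2) = card upper"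
    using k_ge_2 m_gt by auto
  then show ?thesis unfolding h_def by simp
qed

lemma complement_pair_disjoint:
  assumes "A \<in> ksubsets lower r"
  shows "A \<inter> (lower - A) = {}" "upper \<inter> A = {}" "upper \<inter> (lower - A) = {}"
proof -
  have "upper \<inter> lower = {}" by auto
  then show "A \<inter> (lower - A) = {}" "upper \<inter> A = {}" "upper \<inter> (lower - A) = {}"
    using assms unfolding ksubsets_def by blast+
qed

text \<open>A member not contained in \<open>lower\<close> misses fewer than \<open>k\<close> of its points, since some
  \<open>k\<close>-subset of \<open>lower\<close> would avoid it otherwise.\<close>
lemma mnk_intersecting_member_cases:
  assumes \<F>: "mnk_intersecting m (2*k-2) k \<F>" and G: "G \<in> \<F>" "G \<notin> ksubsets lower k"
  obtains A b where "A \<in> ksubsets lower (k - 1)" "b \<in> upper" "G = insert b A"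
proof -
  have G_sub: "G \<subseteq> {1..m}" and card_G: "card G = k"
    using \<F> G unfolding mnk_intersecting_def ksubsets_def by auto
  have fin: "finite G" using G_sub finite_subset by blast
  define A where "A = G \<inter> lower"
  have "card (lower - G) < k"
    using \<F> G(1) intersecting_card_Diff_less unfolding mnk_intersecting_def by blast
  moreover have "card lower = card A + card (lower - G)"
    unfolding A_def using card_Int_Diff[of lower G] by (simp add: Int_commute)
  ultimately have "k - 1 \<le> card A" using card_lower by linarith
  moreover have "A \<noteq> G" using G(2) card_G unfolding A_def ksubsets_def by auto
  then have "card A < k"
    using psubset_card_mono[OF fin] card_G unfolding A_def by blast
  ultimately have card_A: "card A = k - 1" by linarith
  then have "card (G - A) = 1"
    using card_Diff_subset[of A G] fin card_G k_ge_2 unfolding A_def by (simp add: finite_subset)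
  then obtain b where b: "G - A = {b}" by (rule card_1_singletonE)
  show thesis
  proof
    show "A \<in> ksubsets lower (k - 1)" using card_A unfolding A_def ksubsets_def by simp
    have "b \<in> G" "b \<notin> lower" using b unfolding A_def by auto
    then show "b \<in> upper" using G_sub by force
    show "G = insert b A" using b unfolding A_def by blast
  qed
qed

definition extremal_family :: "nat set set \<Rightarrow> nat set set" where
  "extremal_family \<F>s = ksubsets lower k \<union> {F \<union> {b} | F b. F \<in> \<F>s \<and> b \<in> upper}"

lemma card_extremal_family:
  assumes "\<F>s \<subseteq> ksubsets lower (k - 1)"
  shows "card (extremal_family \<F>s) = ((2*k-2) choose k) + card \<F>s * card upper"
proof -
  have "card (extremal_family \<F>s) =
      card (ksubsets lower k) + card {F \<union> {b} | F b. F \<in> \<F>s \<and> b \<in> upper}"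
    unfolding extremal_family_def
  proof (rule card_Un_disjoint)
    show "finite {F \<union> {b} | F b. F \<in> \<F>s \<and> b \<in> upper}"
      using finite_subset[OF assms finite_ksubsets] by (intro finite_image_set2) simp_all
  qed (auto simp: finite_ksubsets ksubsets_def)
  moreover have "\<F>s \<subseteq> Pow lower" using assms unfolding ksubsets_def by blast
  ultimately show ?thesis
    using card_ksubsets[of lower k] card_insert_family[of \<F>s lower upper] by simp
qed

lemma extremal_family_mnk_intersecting:
  assumes \<F>s: "\<F>s \<subseteq> ksubsets lower (k - 1)" "intersecting \<F>s"
  shows "mnk_intersecting m (2*k-2) k (extremal_family \<F>s)"
proof -
  have base: "intersecting (ksubsets lower k)"
    using card_lower k_ge_2 by (intro intersecting_ksubsets) auto
  have base_ext: "X \<inter> insert b A \<noteq> {}" if X: "X \<in> ksubsets lower k" and A: "A \<in> \<F>s" for X A b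
  proof
    assume "X \<inter> insert b A = {}"
    then have "X \<subseteq> lower - A" using X unfolding ksubsets_def by blast
    then have "card X \<le> card (lower - A)" by (intro card_mono) auto
    moreover have "card (lower - A) = k - 1"
      using Diff_in_ksubsets[of lower A "k - 1"] A \<F>s(1) card_lower k_ge_2
      unfolding ksubsets_def by auto
    ultimately show False using X k_ge_2 unfolding ksubsets_def by simp
  qed
  have member: "X \<in> ksubsets lower k \<or> (\<exists>A b. A \<in> \<F>s \<and> X = insert b A)"
    if "X \<in> extremal_family \<F>s" for X
    using that unfolding extremal_family_def by blast
  have "intersecting (extremal_family \<F>s)"
    unfolding intersecting_def
  proof (intro ballI)
    fix X Y assume "X \<in> extremal_family \<F>s" "Y \<in> extremal_family \<F>s"
    from member[OF this(1)] member[OF this(2)] show "X \<inter> Y \<noteq> {}"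
    proof (elim disjE exE conjE)
      assume "X \<in> ksubsets lower k" "Y \<in> ksubsets lower k"
      then show ?thesis using base unfolding intersecting_def by blast
    next
      fix A b assume "X \<in> ksubsets lower k" "A \<in> \<F>s" "Y = insert b A"
      then show ?thesis using base_ext by blast
    next
      fix A b assume "A \<in> \<F>s" "X = insert b A" "Y \<in> ksubsets lower k"
      then show ?thesis using base_ext by blast
    next
      fix A b A' b' assume "A \<in> \<F>s" "X = insert b A" "A' \<in> \<F>s" "Y = insert b' A'"
      then show ?thesis using \<F>s(2) unfolding intersecting_def by blast
    qed
  qed
  moreover have "extremal_family \<F>s \<subseteq> ksubsets {1..m} k"
  proof -
    have "insert b A \<in> ksubsets {1..m} k" if "A \<in> \<F>s" "b \<in> upper" for A b
    proof -
      have "A \<subseteq> lower" "card A = k - 1" using that \<F>s(1) unfolding ksubsets_def by auto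
      moreover have "finite A" using \<open>A \<subseteq> lower\<close> finite_subset by blast
      moreover have "b \<notin> A" using \<open>A \<subseteq> lower\<close> that(2) by fastforce
      moreover have "lower \<subseteq> {1..m}" using m_gt by auto
      ultimately show ?thesis using that k_ge_2 m_gt unfolding ksubsets_def by auto
    qed
    moreover have "ksubsets lower k \<subseteq> ksubsets {1..m} k" using m_gt by (intro ksubsets_mono) auto
    ultimately show ?thesis unfolding extremal_family_def by auto
  qed
  ultimately show ?thesis
    unfolding mnk_intersecting_def extremal_family_def by blast
qed


lemma card_intersecting_ksubsets_lower_le:
  assumes "\<G> \<subseteq> ksubsets lower (k - 1)" "intersecting \<G>"
  shows "card \<G> \<le> (2*k-3) choose (k-2)"
  using card_intersecting_ksubsets_half[of lower "k - 1" \<G>] assms card_lower card_ksubsets_lower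
  by simp

lemma intersecting_ksubsets_lower_attains:
  obtains \<F>s where "\<F>s \<subseteq> ksubsets lower (k - 1)" "intersecting \<F>s"
    "card \<F>s = (2*k-3) choose (k-2)"
proof
  let ?S = "{A \<in> ksubsets lower (k - 1). 1 \<in> A}"
  show "?S \<subseteq> ksubsets lower (k - 1)" by blast
  show "intersecting ?S" unfolding intersecting_def by blast
  show "card ?S = (2*k-3) choose (k-2)"
    using card_star_ksubsets_half[of lower "k - 1" 1] card_lower card_ksubsets_lower k_ge_2 by simp
qed

lemma card_le_sum_extensions:
  assumes \<F>: "mnk_intersecting m (2*k-2) k \<F>"
  shows "card \<F> \<le> ((2*k-2) choose k) + (\<Sum>A\<in>ksubsets lower (k - 1). card (extensions \<F> upper A))"
proof -
  let ?\<Sigma> = "SIGMA A:ksubsets lower (k - 1). extensions \<F> upper A"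
  have fin_\<Sigma>: "finite ?\<Sigma>"
    using finite_subset[OF extensions_subset] by (intro finite_SigmaI) (simp_all add: finite_ksubsets)
  have "\<F> - ksubsets lower k \<subseteq> (\<lambda>(A, b). insert b A) ` ?\<Sigma>"
  proof
    fix G assume "G \<in> \<F> - ksubsets lower k"
    then obtain A b where "A \<in> ksubsets lower (k - 1)" "b \<in> upper" "G = insert b A" "G \<in> \<F>"
      using mnk_intersecting_member_cases[OF \<F>] by blast
    then show "G \<in> (\<lambda>(A, b). insert b A) ` ?\<Sigma>" unfolding extensions_def by force
  qed
  then have "card (\<F> - ksubsets lower k) \<le> card ?\<Sigma>"
    using card_mono[OF finite_imageI[OF fin_\<Sigma>]] card_image_le[OF fin_\<Sigma>] le_trans by blast
  also have "\<dots> = (\<Sum>A\<in>ksubsets lower (k - 1). card (extensions \<F> upper A))"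
    using finite_subset[OF extensions_subset] by (simp add: card_SigmaI finite_ksubsets)
  finally have "card (\<F> - ksubsets lower k)
      \<le> (\<Sum>A\<in>ksubsets lower (k - 1). card (extensions \<F> upper A))" .
  moreover have "card \<F> = card (ksubsets lower k) + card (\<F> - ksubsets lower k)"
    using \<F> card_Int_Diff[OF mnk_intersecting_finite[OF \<F>], of "ksubsets lower k"]
    unfolding mnk_intersecting_def by (simp add: Int_absorb1)
  ultimately show ?thesis using card_ksubsets[of lower k] by simp
qed

lemma card_extension_pair_le:
  assumes "mnk_intersecting m (2*k-2) k \<F>" "A \<in> ksubsets lower (k - 1)"
  shows "card (extensions \<F> upper A) + card (extensions \<F> upper (lower - A)) \<le> card upper"
  using assms(1) card_upper_gt_2
  by (intro card_extensions_disjoint_le complement_pair_disjoint[OF assms(2)])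
    (simp_all add: mnk_intersecting_def)

lemma sum_extension_pairs:
  "(\<Sum>A\<in>ksubsets lower (k - 1). card (extensions \<F> upper A) + card (extensions \<F> upper (lower - A)))
    = 2 * (\<Sum>A\<in>ksubsets lower (k - 1). card (extensions \<F> upper A))"
  using sum_ksubsets_complement[of lower "k - 1" "\<lambda>A. card (extensions \<F> upper A)"] card_lower
  by (simp add: sum.distrib)

lemma card_mnk_intersecting_le:
  assumes "mnk_intersecting m (2*k-2) k \<F>"
  shows "card \<F> \<le> ((2*k-2) choose k) + ((2*k-3) choose (k-2)) * card upper"
proof -
  have "2 * (\<Sum>A\<in>ksubsets lower (k - 1). card (extensions \<F> upper A))
      \<le> (\<Sum>A\<in>ksubsets lower (k - 1). card upper)"
    unfolding sum_extension_pairs[symmetric] using card_extension_pair_le[OF assms] by (rule sum_mono)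
  then show ?thesis
    using card_le_sum_extensions[OF assms] card_ksubsets_lower by simp
qed

lemma extension_pairs_tight:
  assumes \<F>: "mnk_intersecting m (2*k-2) k \<F>"
    and card_\<F>: "card \<F> = ((2*k-2) choose k) + ((2*k-3) choose (k-2)) * card upper"
    and A: "A \<in> ksubsets lower (k - 1)"
  shows "card (extensions \<F> upper A) + card (extensions \<F> upper (lower - A)) = card upper"
proof -
  let ?pair = "\<lambda>A. card (extensions \<F> upper A) + card (extensions \<F> upper (lower - A))"
  have "(\<Sum>A\<in>ksubsets lower (k - 1). card upper) \<le> (\<Sum>A\<in>ksubsets lower (k - 1). ?pair A)"
    unfolding sum_extension_pairs using card_le_sum_extensions[OF \<F>] card_\<F> card_ksubsets_lower by simp
  moreover have "(\<Sum>A\<in>ksubsets lower (k - 1). ?pair A) \<le> (\<Sum>A\<in>ksubsets lower (k - 1). card upper)"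
    using card_extension_pair_le[OF \<F>] by (rule sum_mono)
  ultimately have "(\<Sum>A\<in>ksubsets lower (k - 1). ?pair A) = (\<Sum>A\<in>ksubsets lower (k - 1). card upper)"
    by linarith
  then show ?thesis
    by (rule sum_mono_inv[where f = ?pair and g = "\<lambda>_. card upper",
          OF _ card_extension_pair_le[OF \<F>] A finite_ksubsets[OF finite_atLeastAtMost]])
qed

text \<open>In an extremal family every \<open>(k-1)\<close>-subset of \<open>lower\<close> is extended either by all of
  \<open>upper\<close> or by nothing; the sets of the first kind form \<open>\<F>s\<close>.\<close>
lemma mnk_intersecting_maximum_structure:
  assumes \<F>: "mnk_intersecting m (2*k-2) k \<F>"
    and card_\<F>: "card \<F> = ((2*k-2) choose k) + ((2*k-3) choose (k-2)) * card upper"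
  obtains \<F>s where "\<F>s \<subseteq> ksubsets lower (k - 1)" "intersecting \<F>s" "\<F> = extremal_family \<F>s"
proof
  let ?\<F>s = "{A \<in> ksubsets lower (k - 1). extensions \<F> upper A = upper}"
  have full: "extensions \<F> upper A = upper \<and> extensions \<F> upper (lower - A) = {}"
    if A: "A \<in> ksubsets lower (k - 1)" and "extensions \<F> upper A \<noteq> {}" for A
    using \<F> that(2) card_upper_gt_2 extension_pairs_tight[OF \<F> card_\<F> A]
    by (intro extensions_disjoint_eq complement_pair_disjoint[OF A]) (simp_all add: mnk_intersecting_def)
  show "?\<F>s \<subseteq> ksubsets lower (k - 1)" by blast
  show "intersecting ?\<F>s"
    unfolding intersecting_def
  proof (intro ballI notI)
    fix A A' assume A: "A \<in> ?\<F>s" and A': "A' \<in> ?\<F>s" and disj: "A \<inter> A' = {}"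
    have "A' \<subseteq> lower - A" "lower - A \<in> ksubsets lower (k - 1)"
      using A A' disj complement_in_ksubsets[of lower "k - 1" A] card_lower
      unfolding ksubsets_def by auto
    then have "A' = lower - A"
      using A' card_subset_eq[of "lower - A" A'] unfolding ksubsets_def by auto
    moreover have "upper \<noteq> {}" using card_upper_gt_2 by auto
    ultimately show False using A A' full[of A] by simp
  qed
  show "\<F> = extremal_family ?\<F>s"
  proof
    show "\<F> \<subseteq> extremal_family ?\<F>s"
    proof
      fix G assume G: "G \<in> \<F>"
      show "G \<in> extremal_family ?\<F>s"
      proof (cases "G \<in> ksubsets lower k")
        case False
        then obtain A b where A: "A \<in> ksubsets lower (k - 1)" "b \<in> upper" "G = insert b A"
          using mnk_intersecting_member_cases[OF \<F> G] by blast
        then have "b \<in> extensions \<F> upper A" using G unfolding extensions_def by simp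
        then have "A \<in> ?\<F>s" using full[OF A(1)] A(1) by blast
        then show ?thesis using A unfolding extremal_family_def by blast
      qed (simp add: extremal_family_def)
    qed
    have "insert b A \<in> \<F>" if "A \<in> ?\<F>s" "b \<in> upper" for A b
      using that unfolding extensions_def by blast
    then show "extremal_family ?\<F>s \<subseteq> \<F>"
      using \<F> unfolding extremal_family_def mnk_intersecting_def by auto
  qed
qed

lemma alpha_eq: "alpha m (2*k-2) k = ((2*k-2) choose k) + ((2*k-3) choose (k-2)) * card upper"
proof -
  obtain \<F>s where \<F>s: "\<F>s \<subseteq> ksubsets lower (k - 1)" "intersecting \<F>s"
    "card \<F>s = (2*k-3) choose (k-2)"
    by (rule intersecting_ksubsets_lower_attains)
  show ?thesis
  proof (rule alpha_eqI)
    show "mnk_intersecting m (2*k-2) k (extremal_family \<F>s)"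
      using extremal_family_mnk_intersecting[OF \<F>s(1,2)] .
    show "card (extremal_family \<F>s) = ((2*k-2) choose k) + ((2*k-3) choose (k-2)) * card upper"
      using card_extremal_family[OF \<F>s(1)] \<F>s(3) by simp
  qed (rule card_mnk_intersecting_le)
qed

lemma maximum_mnk_intersecting_family:
  assumes \<F>: "mnk_intersecting m (2*k-2) k \<F>" and card_\<F>: "card \<F> = alpha m (2*k-2) k"
  obtains \<F>s where "\<F>s \<subseteq> ksubsets lower (k - 1)" "intersecting \<F>s"
    "card \<F>s = (2*k-3) choose (k-2)" "\<F> = extremal_family \<F>s"
proof -
  have "card \<F> = ((2*k-2) choose k) + ((2*k-3) choose (k-2)) * card upper"
    using card_\<F> alpha_eq by simp
  then obtain \<F>s where \<F>s: "\<F>s \<subseteq> ksubsets lower (k - 1)" "intersecting \<F>s"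
    "\<F> = extremal_family \<F>s"
    using mnk_intersecting_maximum_structure[OF \<F>] by blast
  have "card \<F>s * card upper = ((2*k-3) choose (k-2)) * card upper"
    using card_\<F> alpha_eq \<F>s(3) card_extremal_family[OF \<F>s(1)] by simp
  moreover have "card upper \<noteq> 0" using card_upper_gt_2 by linarith
  ultimately have "card \<F>s = (2*k-3) choose (k-2)" by (metis mult_right_cancel)
  then show thesis using that \<F>s by simp
qed

end

theorem theorem9:
  fixes k m :: nat
  assumes "k \<ge> 2" and "m > 2 * k"
  shows "alpha m (2*k - 2) k = h m (2*k - 2) k
    \<and> (\<forall>\<F>. mnk_intersecting m (2*k - 2) k \<F> \<and> card \<F> = alpha m (2*k - 2) k \<longrightarrow>
         (\<exists>\<F>s. \<F>s \<subseteq> ksubsets {1..2*k - 2} (k - 1) \<and> intersecting \<F>s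
            \<and> (\<forall>\<G>. \<G> \<subseteq> ksubsets {1..2*k - 2} (k - 1) \<and> intersecting \<G> \<longrightarrow> card \<G> \<le> card \<F>s)
            \<and> \<F> = ksubsets {1..2*k - 2} k \<union> {F \<union> {b} | F b. F \<in> \<F>s \<and> b \<in> {2*k - 1..m}}))"
proof (intro conjI allI impI)
  show "alpha m (2*k - 2) k = h m (2*k - 2) k"
    using alpha_eq[OF assms] h_eq[OF assms] by simp
  fix \<F> assume \<F>: "mnk_intersecting m (2*k - 2) k \<F> \<and> card \<F> = alpha m (2*k - 2) k"
  obtain \<F>s where \<F>s: "\<F>s \<subseteq> ksubsets {1..2*k-2} (k - 1)" "intersecting \<F>s"
    "card \<F>s = (2*k-3) choose (k-2)" "\<F> = extremal_family k m \<F>s"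
    using maximum_mnk_intersecting_family[OF assms conjunct1[OF \<F>] conjunct2[OF \<F>]] .
  then show "\<exists>\<F>s. \<F>s \<subseteq> ksubsets {1..2*k - 2} (k - 1) \<and> intersecting \<F>s
      \<and> (\<forall>\<G>. \<G> \<subseteq> ksubsets {1..2*k - 2} (k - 1) \<and> intersecting \<G> \<longrightarrow> card \<G> \<le> card \<F>s)
      \<and> \<F> = ksubsets {1..2*k - 2} k \<union> {F \<union> {b} | F b. F \<in> \<F>s \<and> b \<in> {2*k - 1..m}}"
    using card_intersecting_ksubsets_lower_le[OF assms]
    by (intro exI[of _ \<F>s]) (simp add: extremal_family_def[OF assms])
qed

end
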